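(* Let $k$ be a field, $Q,q\in k^\times$, $n,d\geq1$, and consider the right action of $\mathcal H^B_{Q,q}(d)$ on $V_n^{\otimes d}$. For each $1\le i\le d$, every eigenvalue of $K_i=T_{i-1}\cdots T_1T_0T_1\cdots T_{i-1}$ acting on $V_n^{\otimes d}$ is of the form $-Qq^{2j}$ or $Q^{-1}q^{2j}$ for some integer $j$ with $|j|<i$.
   Context: $\mathcal H^B_{Q,q}(d)$ is the $k$-algebra generated by $T_0,\dots,T_{d-1}$ with relations $(T_0+Q)(T_0-Q^{-1})=0$; $(T_i+q)(T_i-q^{-1})=0$ ($i>0$); $T_iT_{i+1}T_i=T_{i+1}T_iT_{i+1}$ ($i>0$); $T_0T_1T_0T_1=T_1T_0T_1T_0$; $T_iT_j=T_jT_i$ ($|i-j|>1$). For $n=2r$ let $\mathbb I_n=\{-\tfrac{2r-1}{2},\dots,-\tfrac12,\tfrac12,\dots,\tfrac{2r-1}{2}\}$ and for $n=2r+1$ let $\mathbb I_n=\{-r,\dots,0,\dots,r\}$. $V_n$ is the $k$-vector space with basis $\{v_i: i\in\mathbb I_n\}$. Define $R_q:V_n\otimes V_n\to V_n\otimes V_n$ by $v_i\otimes v_j\mapsto q^{-1}v_i\otimes v_j$ if $i=j$, $v_j\otimes v_i$ if $i<j$, $v_j\otimes v_i+(q^{-1}-q)v_i\otimes v_j$ if $i>j$; and $K_Q:V_n\to V_n$ by $v_i\mapsto Q^{-1}v_i$ if $i=0$, $v_{-i}$ if $i>0$, $v_{-i}+(Q^{-1}-Q)v_i$ if $i<0$.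 The right action of $\mathcal H^B_{Q,q}(d)$ on $V_n^{\otimes d}$ is given by letting $T_i$ ($i>0$) act as $R_q$ on tensor factors $i,i+1$ (identity elsewhere) and $T_0$ act as $K_Q$ on the first tensor factor (identity elsewhere). *)

theory Defs
  imports Main
begin

text \<open>Encoding: a basis index i of I_n (integers or half-integers) is stored as the
  integer 2i. This encoding preserves order, sign and negation.\<close>

definition Idx :: "nat \<Rightarrow> int set" where
  "Idx n = {a. \<bar>a\<bar> \<le> int n - 1 \<and> even (a + int n - 1)}"

text \<open>Basis of V_n^{\<otimes>d}: words (i_1,...,i_d), i.e. lists of length d over I_n.\<close>
definition Words :: "nat \<Rightarrow> nat \<Rightarrow> int list set" where
  "Words n d = {w. length w = d \<and> set w \<subseteq> Idx n}"

text \<open>Vectors of V_n^{\<otimes>d}: coefficient functions supported on the basis words.\<close>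
definition Vspace :: "nat \<Rightarrow> nat \<Rightarrow> (int list \<Rightarrow> 'k::field) set" where
  "Vspace n d = {v. \<forall>u. u \<notin> Words n d \<longrightarrow> v u = 0}"

text \<open>Coefficient of v_{i'} (x) v_{j'} in R_q(v_i (x) v_j).\<close>
definition Rcoeff :: "'k::field \<Rightarrow> int \<Rightarrow> int \<Rightarrow> int \<Rightarrow> int \<Rightarrow> 'k" where
  "Rcoeff q i j i' j' =
    (if i = j then (if i' = i \<and> j' = j then inverse q else 0)
     else if i < j then (if i' = j \<and> j' = i then 1 else 0)
     else (if i' = j \<and> j' = i then 1 else 0)
          + (if i' = i \<and> j' = j then inverse q - q else 0))"

text \<open>Coefficient of v_{i'} in K_Q(v_i).\<close>
definition Kcoeff :: "'k::field \<Rightarrow> int \<Rightarrow> int \<Rightarrow> 'k" where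
  "Kcoeff Q i i' =
    (if i = 0 then (if i' = 0 then inverse Q else 0)
     else if i > 0 then (if i' = - i then 1 else 0)
     else (if i' = - i then 1 else 0) + (if i' = i then inverse Q - Q else 0))"

text \<open>Matrix coefficient (basis word w to basis word u) of the generator T_p acting on
  V_n^{\<otimes>d}: T_0 acts by K_Q on the first tensor factor (list position 0);
  T_p for p > 0 acts by R_q on tensor factors p, p+1 (list positions p-1, p).\<close>
definition Tcoeff :: "'k::field \<Rightarrow> 'k \<Rightarrow> nat \<Rightarrow> int list \<Rightarrow> int list \<Rightarrow> 'k" where
  "Tcoeff Q q p w u =
    (if p = 0 then
       (if drop 1 w = drop 1 u then Kcoeff Q (w ! 0) (u ! 0) else 0)
     else
       (if take (p - 1) w = take (p - 1) u \<and> drop (p + 1) w = drop (p + 1) u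
        then Rcoeff q (w ! (p - 1)) (w ! p) (u ! (p - 1)) (u ! p) else 0))"

text \<open>Right action of the generator T_p on a vector v (row vector times matrix).\<close>
definition actT :: "nat \<Rightarrow> nat \<Rightarrow> 'k::field \<Rightarrow> 'k \<Rightarrow> nat \<Rightarrow> (int list \<Rightarrow> 'k) \<Rightarrow> (int list \<Rightarrow> 'k)" where
  "actT n d Q q p v =
     (\<lambda>u. if u \<in> Words n d then (\<Sum>w\<in>Words n d. v w * Tcoeff Q q p w u) else 0)"

text \<open>Right action of the word T_{a_1} T_{a_2} ... T_{a_m}: v . T_{a_1} ... T_{a_m}.\<close>
fun actWord :: "nat \<Rightarrow> nat \<Rightarrow> 'k::field \<Rightarrow> 'k \<Rightarrow> nat list \<Rightarrow> (int list \<Rightarrow> 'k) \<Rightarrow> (int list \<Rightarrow> 'k)" where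
  "actWord n d Q q [] v = v"
| "actWord n d Q q (a # as) v = actWord n d Q q as (actT n d Q q a v)"

definition Kword :: "nat \<Rightarrow> nat list" where
  "Kword i = rev [1..<i] @ [0] @ [1..<i]"

definition is_eigenvalue_K :: "nat \<Rightarrow> nat \<Rightarrow> 'k::field \<Rightarrow> 'k \<Rightarrow> nat \<Rightarrow> 'k \<Rightarrow> bool" where
  "is_eigenvalue_K n d Q q i lam \<longleftrightarrow>
     (\<exists>v\<in>Vspace n d. v \<noteq> (\<lambda>_. 0) \<and> actWord n d Q q (Kword i) v = (\<lambda>u. lam * v u))"

end

theory Submission
  imports Defs HOL.Vector_Spaces "HOL-Library.Function_Algebras"
begin

(* K_1 = T_0 satisfies (K_1 + Q)(K_1 - Q^-1) = 0 on V_n^(x)d, and K_(j+1) = T_j K_j T_j. The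
   inductive step is a statement about the affine Hecke algebra of GL_2: if T satisfies the
   Hecke quadratic relation, X T X T = T X T X and p(X) = 0 for a split polynomial p, then
   Y = T X T is annihilated by the split polynomial whose roots are those of p multiplied by
   q^2, by q^-2 and by 1. Indeed X and Y commute, T commutes with X + Y and XY and hence with
   p(X) + p(Y), that is with p(Y); on the image W of p(Y) the operators T and Y commute, so
   there X = T^-1 Y T^-1 = Y T^-2. From this, X - q^2 Y maps W into the (-q)-eigenspace of T, where
   X = q^-2 Y; so p(q^-2 Y) p(q^2 Y) p(Y) = 0. Starting from the roots -Q, Q^-1 of K_1, the
   roots obtained for K_i are -Q q^2j and Q^-1 q^2j with |j| < i, and every eigenvalue of K_i
   is one of them. *)

section \<open>Operators annihilated by split polynomials\<close>

context vector_space
begin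

abbreviation linear_endo :: "('b \<Rightarrow> 'b) \<Rightarrow> bool" where
  "linear_endo f \<equiv> Vector_Spaces.linear (*s) (*s) f"

lemma linear_endoI:
  assumes "\<And>x y. f (x + y) = f x + f y" and "\<And>c x. f (c *s x) = c *s f x"
  shows "linear_endo f"
  by (rule linear_iff[THEN iffD2]) (simp add: assms vector_space_axioms)

fun roots_op :: "'a list \<Rightarrow> ('b \<Rightarrow> 'b) \<Rightarrow> 'b \<Rightarrow> 'b" where
  "roots_op [] A v = v"
| "roots_op (r # rs) A v = A (roots_op rs A v) - r *s roots_op rs A v"

lemma linear_roots_op:
  assumes "linear_endo A"
  shows "linear_endo (roots_op rs A)"
proof (induction rs)
  case Nil
  show ?case by (rule linear_endoI) simp_all
next
  case (Cons r rs)
  interpret A: linear "(*s)" "(*s)" A by fact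
  interpret P: linear "(*s)" "(*s)" "roots_op rs A" by fact
  show ?case
    by (rule linear_endoI) (simp_all add: A.add P.add A.scale P.scale algebra_simps scale_left_commute)
qed

lemma roots_op_append: "roots_op (rs @ ss) A v = roots_op rs A (roots_op ss A v)"
  by (induction rs) auto

lemma roots_op_shift:
  assumes "linear_endo A"
  shows "A (roots_op rs A v) = roots_op rs A (A v)"
proof (induction rs)
  case (Cons r rs)
  interpret A: linear "(*s)" "(*s)" A by fact
  show ?case using Cons by (simp add: A.diff A.scale)
qed simp

lemma roots_op_eigenvector:
  assumes "linear_endo A" and "A v = e *s v"
  shows "roots_op rs A v = (\<Prod>r\<leftarrow>rs. e - r) *s v"
proof (induction rs)
  case (Cons r rs)
  interpret A: linear "(*s)" "(*s)" A by fact
  show ?case using Cons assms(2) by (simp add: A.scale scale_left_commute algebra_simps)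
qed simp

lemma eigenvalue_in_roots:
  assumes "linear_endo A" and "A v = e *s v" and "v \<noteq> 0" and "roots_op rs A v = 0"
  shows "e \<in> set rs"
  using assms roots_op_eigenvector[of A v e rs] by (auto simp: prod_list_zero_iff)

lemma roots_op_scaled:
  assumes "linear_endo B" and "s \<noteq> 0"
  shows "roots_op rs (\<lambda>v. s *s B v) v = s ^ length rs *s roots_op (map (\<lambda>r. r / s) rs) B v"
proof (induction rs)
  case (Cons r rs)
  interpret B: linear "(*s)" "(*s)" B by fact
  have "s * s ^ length rs * (r / s) = r * s ^ length rs" using assms(2) by simp
  then show ?case using Cons by (simp add: B.scale algebra_simps)
qed simp

lemma roots_op_closed:
  assumes "subspace S" and "\<And>x. x \<in> S \<Longrightarrow> A x \<in> S" and "x \<in> S"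
  shows "roots_op rs A x \<in> S"
  using assms by (induction rs) (auto intro: subspace_diff subspace_scale)

lemma roots_op_cong:
  assumes "subspace S" and "\<And>x. x \<in> S \<Longrightarrow> C x \<in> S" and "\<And>x. x \<in> S \<Longrightarrow> A x = C x"
    and "x \<in> S"
  shows "roots_op rs A x = roots_op rs C x"
  by (induction rs) (simp_all add: assms roots_op_closed)

lemma roots_op_eq_sum_powers:
  "\<exists>c N. \<forall>A. linear_endo A \<longrightarrow> (\<forall>v. roots_op rs A v = (\<Sum>k<N. c k *s (A ^^ k) v))"
proof (induction rs)
  case Nil
  show ?case by (rule exI[of _ "\<lambda>_. 1"], rule exI[of _ 1]) simp
next
  case (Cons r rs)
  then obtain c N where H: "\<And>A v. linear_endo A \<Longrightarrow> roots_op rs A v = (\<Sum>k<N. c k *s (A ^^ k) v)"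
    by blast
  define c' where "c' k = (if k = 0 then 0 else c (k - 1)) - r * (if k < N then c k else 0)" for k
  have "roots_op (r # rs) A v = (\<Sum>k<Suc N. c' k *s (A ^^ k) v)" if A: "linear_endo A" for A v
  proof -
    interpret A: linear "(*s)" "(*s)" A by fact
    have "roots_op (r # rs) A v = (\<Sum>k<N. c k *s (A ^^ Suc k) v) - (\<Sum>k<N. (r * c k) *s (A ^^ k) v)"
      using H[OF A] by (simp add: A.sum A.scale scale_sum_right)
    also have "(\<Sum>k<N. c k *s (A ^^ Suc k) v) =
        (\<Sum>k<Suc N. (if k = 0 then 0 else c (k - 1)) *s (A ^^ k) v)"
      by (subst sum.lessThan_Suc_shift) simp
    also have "(\<Sum>k<N. (r * c k) *s (A ^^ k) v) =
        (\<Sum>k<Suc N. (r * (if k < N then c k else 0)) *s (A ^^ k) v)"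
      by simp
    also have "(\<Sum>k<Suc N. (if k = 0 then 0 else c (k - 1)) *s (A ^^ k) v) -
        (\<Sum>k<Suc N. (r * (if k < N then c k else 0)) *s (A ^^ k) v) =
        (\<Sum>k<Suc N. c' k *s (A ^^ k) v)"
      by (simp add: c'_def scale_left_diff_distrib sum_subtractf)
    finally show ?thesis .
  qed
  then show ?case by blast
qed

end

section \<open>A lemma on the affine Hecke algebra of GL(2)\<close>

text \<open>X and Y = T X T play the roles of the commuting generators X_1, X_2 of the affine Hecke
  algebra of GL(2); the relations are only required on the invariant subspace M.\<close>

locale affine_hecke2 = vector_space scale + T: linear scale scale T + X: linear scale scale X
  for scale :: "'a::field \<Rightarrow> 'b::ab_group_add \<Rightarrow> 'b" (infixr \<open>*s\<close> 75) and T X :: "'b \<Rightarrow> 'b" +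
  fixes M :: "'b set" and q :: 'a
  assumes subspace_M: "subspace M"
    and T_M: "v \<in> M \<Longrightarrow> T v \<in> M"
    and X_M: "v \<in> M \<Longrightarrow> X v \<in> M"
    and T_quadratic: "v \<in> M \<Longrightarrow> T (T v) = v - (q - inverse q) *s T v"
    and braid_B: "v \<in> M \<Longrightarrow> X (T (X (T v))) = T (X (T (X v)))"
    and q_nonzero: "q \<noteq> 0"
begin

definition Y :: "'b \<Rightarrow> 'b" where
  "Y v = T (X (T v))"

lemma linear_Y: "linear_endo Y"
  by (rule linear_endoI) (simp_all add: Y_def T.add X.add T.scale X.scale)

sublocale Y: linear scale scale Y
  by (fact linear_Y)

lemma Y_M: "v \<in> M \<Longrightarrow> Y v \<in> M"
  by (simp add: Y_def T_M X_M)

lemma X_Y_commute: "v \<in> M \<Longrightarrow> X (Y v) = Y (X v)"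
  by (simp add: Y_def braid_B)

lemma T_inverse: "v \<in> M \<Longrightarrow> T (T v + (q - inverse q) *s v) = v"
  by (simp add: T.add T.scale T_quadratic)

lemma Y_T_quadratic: "v \<in> M \<Longrightarrow> Y (T (T v)) = Y v - (q - inverse q) *s Y (T v)"
  by (simp add: T_quadratic Y.diff Y.scale)

lemma T_commute_X_plus_Y:
  assumes "w \<in> M"
  shows "T (X w + Y w) = X (T w) + Y (T w)"
proof -
  let ?c = "q - inverse q"
  have "T (Y w) = X (T w) - ?c *s T (X (T w))"
    by (simp add: Y_def T_quadratic T_M X_M assms)
  moreover have "Y (T w) = T (X w) - ?c *s T (X (T w))"
    by (simp add: Y_def T_quadratic assms T.diff X.diff T.scale X.scale)
  ultimately show ?thesis by (simp add: T.add)
qed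

lemma T_commute_X_Y:
  assumes "w \<in> M"
  shows "T (X (Y w)) = X (Y (T w))"
proof -
  let ?c = "q - inverse q"
  have "T (X (Y w)) = T (T (X (T (X w))))" by (simp add: Y_def braid_B assms)
  also have "\<dots> = X (T (X w)) - ?c *s T (X (T (X w)))"
    by (simp add: T_quadratic T_M X_M assms)
  also have "\<dots> = X (T (X w)) - ?c *s X (T (X (T w)))"
    by (simp add: braid_B assms)
  also have "\<dots> = X (Y (T w))"
    by (simp add: Y_def T_quadratic assms T.diff X.diff T.scale X.scale)
  finally show ?thesis .
qed

lemma T_commute_power_sums:
  assumes w: "w \<in> M"
  shows "T ((X ^^ k) w + (Y ^^ k) w) = (X ^^ k) (T w) + (Y ^^ k) (T w)"
proof -
  define p where "p k u = (X ^^ k) u + (Y ^^ k) u" for k u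
  have X_pow_M: "u \<in> M \<Longrightarrow> (X ^^ k) u \<in> M" for k u
    by (induction k) (simp_all add: X_M)
  have Y_pow_M: "u \<in> M \<Longrightarrow> (Y ^^ k) u \<in> M" for k u
    by (induction k) (simp_all add: Y_M)
  have p_M: "u \<in> M \<Longrightarrow> p k u \<in> M" for k u
    by (simp add: p_def subspace_add[OF subspace_M] X_pow_M Y_pow_M)
  have p_rec: "p (Suc (Suc k)) u = X (p (Suc k) u) + Y (p (Suc k) u) - X (Y (p k u))"
    if "u \<in> M" for k u
  proof -
    have "Y (X ((X ^^ k) u)) = X (Y ((X ^^ k) u))"
      using X_Y_commute X_pow_M that by simp
    then show ?thesis by (simp add: p_def X.add Y.add)
  qed
  have "T (p k w) = p k (T w) \<and> T (p (Suc k) w) = p (Suc k) (T w)"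
  proof (induction k)
    case 0
    show ?case using T_commute_X_plus_Y[OF w] by (simp add: p_def T.add)
  next
    case (Suc k)
    have "T (p (Suc (Suc k)) w) = T (X (p (Suc k) w) + Y (p (Suc k) w)) - T (X (Y (p k w)))"
      by (simp add: p_rec w T.diff)
    also have "\<dots> = X (T (p (Suc k) w)) + Y (T (p (Suc k) w)) - X (Y (T (p k w)))"
      by (simp only: T_commute_X_plus_Y T_commute_X_Y p_M w)
    also have "\<dots> = p (Suc (Suc k)) (T w)"
      using Suc.IH by (simp add: p_rec T_M w)
    finally show ?case using Suc.IH by simp
  qed
  then show ?thesis by (simp add: p_def)
qed

lemma T_commute_roots_op_Y:
  assumes "\<And>v. v \<in> M \<Longrightarrow> roots_op rs X v = 0" and w: "w \<in> M"
  shows "T (roots_op rs Y w) = roots_op rs Y (T w)"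
proof -
  obtain c N where c: "\<And>A v. linear_endo A \<Longrightarrow> roots_op rs A v = (\<Sum>k<N. c k *s (A ^^ k) v)"
    using roots_op_eq_sum_powers by blast
  have sum_XY: "roots_op rs X u + roots_op rs Y u = (\<Sum>k<N. c k *s ((X ^^ k) u + (Y ^^ k) u))" for u
    by (simp add: c X.linear_axioms linear_Y scale_right_distrib sum.distrib)
  have "T (roots_op rs X w + roots_op rs Y w) = roots_op rs X (T w) + roots_op rs Y (T w)"
    unfolding sum_XY by (simp add: T.sum T.scale T_commute_power_sums w)
  then show ?thesis using assms T_M by (simp add: T.add)
qed

end

locale affine_hecke2_annihilated = affine_hecke2 +
  fixes rs :: "'a list"
  assumes X_annihilated: "v \<in> M \<Longrightarrow> roots_op rs X v = 0"
begin

definition W :: "'b set" where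
  "W = roots_op rs Y ` M"

definition W_neg :: "'b set" where
  "W_neg = {w \<in> W. T w = (- q) *s w}"

lemma subspace_W: "subspace W"
proof -
  interpret F: linear "(*s)" "(*s)" "roots_op rs Y"
    by (rule linear_roots_op[OF linear_Y])
  show ?thesis unfolding W_def by (rule F.subspace_image[OF subspace_M])
qed

lemma W_M: "w \<in> W \<Longrightarrow> w \<in> M"
  unfolding W_def using roots_op_closed[of M Y] subspace_M Y_M by blast

lemma Y_W: "w \<in> W \<Longrightarrow> Y w \<in> W"
  unfolding W_def using roots_op_shift[OF linear_Y] Y_M by (auto intro: image_eqI)

lemma T_W: "w \<in> W \<Longrightarrow> T w \<in> W"
  unfolding W_def using T_commute_roots_op_Y[OF X_annihilated] T_M by (auto intro: image_eqI)

lemma T_Y_commute_W: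
  assumes "w \<in> W"
  shows "T (Y w) = Y (T w)"
proof -
  obtain m where m: "m \<in> M" "w = roots_op rs Y m"
    using assms by (auto simp: W_def)
  have "roots_op (0 # rs) X v = 0" if "v \<in> M" for v
    using that by (simp add: X_annihilated)
  then have "T (roots_op (0 # rs) Y m) = roots_op (0 # rs) Y (T m)"
    by (rule T_commute_roots_op_Y[OF _ m(1)])
  then show ?thesis
    using T_commute_roots_op_Y[OF X_annihilated m(1)] by (simp add: m(2))
qed

lemma X_on_W:
  assumes w: "w \<in> W"
  shows "X w = (1 + (q - inverse q)\<^sup>2) *s Y w + (q - inverse q) *s Y (T w)"
proof -
  define c where "c = q - inverse q"
  have wM: "w \<in> M" using W_M w .
  have "Y (T w + c *s w) = T (X w)"
    by (simp add: Y_def T_inverse wM c_def)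
  then have "X w = T (Y (T w + c *s w)) + c *s Y (T w + c *s w)"
    by (simp add: T_quadratic T_M X_M wM c_def)
  also have "\<dots> = Y (T (T w)) + c *s Y (T w) + c *s (Y (T w) + c *s Y w)"
    by (simp only: Y.add Y.scale T.add T.scale T_Y_commute_W T_W w)
  also have "\<dots> = (1 + c\<^sup>2) *s Y w + c *s Y (T w)"
    by (simp add: Y_T_quadratic[folded c_def] wM power2_eq_square algebra_simps)
  finally show ?thesis by (simp add: c_def)
qed

lemma subspace_W_neg: "subspace W_neg"
  using subspace_W unfolding subspace_def W_neg_def
  by (auto simp: T.add T.scale scale_right_distrib)

lemma Y_W_neg: "u \<in> W_neg \<Longrightarrow> Y u \<in> W_neg"
  by (auto simp: W_neg_def Y_W T_Y_commute_W Y.scale Y.neg)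

lemma X_on_W_neg:
  assumes "u \<in> W_neg"
  shows "X u = inverse (q\<^sup>2) *s Y u"
proof -
  define c where "c = q - inverse q"
  have u: "u \<in> W" "T u = (- q) *s u" using assms by (auto simp: W_neg_def)
  have "X u = (1 + c\<^sup>2) *s Y u + c *s Y ((- q) *s u)"
    using X_on_W[OF u(1)] u(2) by (simp add: c_def)
  also have "\<dots> = (1 + c\<^sup>2 - c * q) *s Y u"
    by (simp add: Y.scale Y.neg algebra_simps)
  also have "1 + c\<^sup>2 - c * q = inverse (q\<^sup>2)"
    using q_nonzero by (simp add: c_def field_simps power2_eq_square)
  finally show ?thesis .
qed

lemma X_minus_Y_W_neg:
  assumes w: "w \<in> W"
  shows "X w - q\<^sup>2 *s Y w \<in> W_neg"
proof -
  define c where "c = q - inverse q"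
  define a where "a = 1 + c\<^sup>2 - q\<^sup>2"
  have ids: "a - c * c = - q * c" "c = - q * a"
    using q_nonzero by (simp_all add: a_def c_def field_simps power2_eq_square)
  have z: "X w - q\<^sup>2 *s Y w = a *s Y w + c *s Y (T w)"
    using X_on_W[OF w] by (simp add: a_def c_def algebra_simps)
  have "a *s Y w + c *s Y (T w) \<in> W"
    using subspace_W by (simp add: subspace_add subspace_scale Y_W T_W w)
  moreover have "T (a *s Y w + c *s Y (T w)) = a *s Y (T w) + c *s Y (T (T w))"
    by (simp only: T.add T.scale T_Y_commute_W T_W w)
  moreover have "\<dots> = c *s Y w + (a - c * c) *s Y (T w)"
    by (simp add: Y_T_quadratic[folded c_def] W_M w algebra_simps)
  moreover have "\<dots> = (- q * a) *s Y w + (- q * c) *s Y (T w)"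
    by (simp only: ids(2)[symmetric] ids(1))
  moreover have "\<dots> = (- q) *s (a *s Y w + c *s Y (T w))"
    by (simp only: scale_right_distrib scale_scale)
  ultimately show ?thesis by (simp add: W_neg_def z)
qed

lemma roots_op_X_minus_Y_W_neg:
  assumes w: "w \<in> W"
  shows "roots_op ss X w - roots_op ss (\<lambda>v. q\<^sup>2 *s Y v) w \<in> W_neg"
proof (induction ss)
  case Nil
  show ?case using subspace_0[OF subspace_W_neg] by simp
next
  case (Cons r ss)
  let ?a = "roots_op ss X w" and ?b = "roots_op ss (\<lambda>v. q\<^sup>2 *s Y v) w"
  have b: "?b \<in> W"
    using roots_op_closed[OF subspace_W _ w] subspace_W by (simp add: subspace_scale Y_W)
  have "roots_op (r # ss) X w - roots_op (r # ss) (\<lambda>v. q\<^sup>2 *s Y v) w =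
      (inverse (q\<^sup>2) *s Y (?a - ?b) - r *s (?a - ?b)) + (X ?b - q\<^sup>2 *s Y ?b)"
    by (simp add: X_on_W_neg[OF Cons.IH, symmetric] X.diff scale_right_diff_distrib)
  also have "\<dots> \<in> W_neg"
    using subspace_W_neg Cons.IH
    by (simp add: subspace_add subspace_diff subspace_scale Y_W_neg X_minus_Y_W_neg[OF b])
  finally show ?case .
qed

theorem Y_annihilated:
  assumes m: "m \<in> M"
  shows "roots_op (map (\<lambda>r. r * q\<^sup>2) rs @ map (\<lambda>r. r / q\<^sup>2) rs @ rs) Y m = 0"
proof -
  interpret F: linear "(*s)" "(*s)" "roots_op (map (\<lambda>r. r * q\<^sup>2) rs) Y"
    by (rule linear_roots_op[OF linear_Y])
  let ?w = "roots_op rs Y m"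
  let ?u = "roots_op rs (\<lambda>v. q\<^sup>2 *s Y v) ?w"
  have w: "?w \<in> W" using m by (simp add: W_def)
  have "- (roots_op rs X ?w - ?u) \<in> W_neg"
    by (rule subspace_neg[OF subspace_W_neg roots_op_X_minus_Y_W_neg[OF w]])
  then have u: "?u \<in> W_neg"
    by (simp add: X_annihilated W_M w)
  have "roots_op rs (\<lambda>v. inverse (q\<^sup>2) *s Y v) ?u = roots_op rs X ?u"
    using subspace_W_neg u
    by (intro roots_op_cong[symmetric]) (simp_all add: subspace_scale Y_W_neg X_on_W_neg)
  also have "\<dots> = 0"
    using u by (simp add: X_annihilated W_M W_neg_def)
  finally have "roots_op rs (\<lambda>v. inverse (q\<^sup>2) *s Y v) ?u = 0" .
  moreover have "(\<lambda>r. r / inverse (q\<^sup>2)) = (\<lambda>r. r * q\<^sup>2)"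
    by (simp add: divide_inverse)
  ultimately have "roots_op (map (\<lambda>r. r * q\<^sup>2) rs) Y (roots_op (map (\<lambda>r. r / q\<^sup>2) rs) Y ?w) = 0"
    using q_nonzero by (simp add: roots_op_scaled linear_Y F.scale)
  then show ?thesis
    by (simp add: roots_op_append)
qed

end

section \<open>The action on the tensor space\<close>

definition scale_fun :: "'k::field \<Rightarrow> ('a \<Rightarrow> 'k) \<Rightarrow> 'a \<Rightarrow> 'k" where
  "scale_fun c v = (\<lambda>x. c * v x)"

global_interpretation fun_vs: vector_space scale_fun
  by unfold_locales (simp_all add: scale_fun_def fun_eq_iff algebra_simps)

lemma finite_Idx: "finite (Idx n)"
  by (rule finite_subset[of _ "{- int n..int n}"]) (auto simp: Idx_def)

lemma finite_Words: "finite (Words n d)"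
proof -
  have "Words n d = {w. set w \<subseteq> Idx n \<and> length w = d}" by (auto simp: Words_def)
  then show ?thesis using finite_lists_length_eq[OF finite_Idx] by simp
qed

lemma Words_length: "u \<in> Words n d \<Longrightarrow> length u = d"
  by (simp add: Words_def)

lemma uminus_Idx_iff [simp]: "- a \<in> Idx n \<longleftrightarrow> a \<in> Idx n"
  by (auto simp: Idx_def)

lemma Words_update: "u \<in> Words n d \<Longrightarrow> a \<in> Idx n \<Longrightarrow> u[p := a] \<in> Words n d"
  by (auto simp: Words_def dest!: set_update_subset_insert[THEN subsetD])

lemma Words_nth: "u \<in> Words n d \<Longrightarrow> p < d \<Longrightarrow> u ! p \<in> Idx n"
  by (auto simp: Words_def)

definition swap_letters :: "nat \<Rightarrow> int list \<Rightarrow> int list" where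
  "swap_letters p u = u[p := u ! Suc p, Suc p := u ! p]"

definition negate_first :: "int list \<Rightarrow> int list" where
  "negate_first u = u[0 := - u ! 0]"

lemma swap_letters_Words: "u \<in> Words n d \<Longrightarrow> Suc p < d \<Longrightarrow> swap_letters p u \<in> Words n d"
  by (simp add: swap_letters_def Words_update Words_nth Words_length)

lemma negate_first_Words: "u \<in> Words n d \<Longrightarrow> 0 < d \<Longrightarrow> negate_first u \<in> Words n d"
  by (simp add: negate_first_def Words_update Words_nth)

lemma eq_update_two_letters:
  assumes "length w = length u" and "Suc p < length u"
    and "take p w = take p u" and "drop (Suc (Suc p)) w = drop (Suc (Suc p)) u"
  shows "w = u[p := w ! p, Suc p := w ! Suc p]"
proof (rule nth_equalityI)
  fix k assume "k < length w"
  then consider "k < p" | "k = p" | "k = Suc p" | "Suc (Suc p) \<le> k" by linarith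
  then show "w ! k = u[p := w ! p, Suc p := w ! Suc p] ! k"
  proof cases
    case 1
    have "take p w ! k = take p u ! k" using assms(3) by simp
    then show ?thesis using 1 by simp
  next
    case 4
    then obtain i where k: "k = Suc (Suc p) + i" using le_Suc_ex by blast
    have "drop (Suc (Suc p)) w ! i = drop (Suc (Suc p)) u ! i" using assms(4) by simp
    then show ?thesis using k assms(1,2) by simp
  qed (use assms in simp_all)
qed (use assms in simp)

lemma eq_update_first_letter:
  assumes "length w = length u" and "drop 1 w = drop 1 u"
  shows "w = u[0 := w ! 0]"
proof (rule nth_equalityI)
  fix k assume "k < length w"
  have "drop 1 w ! (k - 1) = drop 1 u ! (k - 1)" using assms(2) by simp
  then show "w ! k = u[0 := w ! 0] ! k"
    using assms(1) \<open>k < length w\<close> by (cases k) auto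
qed (use assms in simp)

lemma swap_letters_nth:
  "Suc p < length u \<Longrightarrow> swap_letters p u ! p = u ! Suc p"
  "Suc p < length u \<Longrightarrow> swap_letters p u ! Suc p = u ! p"
  "k \<noteq> p \<Longrightarrow> k \<noteq> Suc p \<Longrightarrow> swap_letters p u ! k = u ! k"
  by (simp_all add: swap_letters_def nth_list_update)

lemma swap_letters_swap_letters: "Suc p < length u \<Longrightarrow> swap_letters p (swap_letters p u) = u"
  by (rule nth_equalityI) (auto simp: swap_letters_def nth_list_update)

lemma negate_first_nth:
  "0 < length u \<Longrightarrow> negate_first u ! 0 = - u ! 0"
  "k \<noteq> 0 \<Longrightarrow> negate_first u ! k = u ! k"
  by (simp_all add: negate_first_def)

lemma negate_first_negate_first: "negate_first (negate_first u) = u"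
  by (cases u) (simp_all add: negate_first_def)

lemma actT_two_terms:
  assumes "u \<in> Words n d" and "u' \<in> Words n d"
    and "\<And>w. w \<in> Words n d \<Longrightarrow> Tcoeff Q q p w u \<noteq> 0 \<Longrightarrow> w = u \<or> w = u'"
  shows "actT n d Q q p v u = (\<Sum>w\<in>{u, u'}. v w * Tcoeff Q q p w u)"
proof -
  have "(\<Sum>w\<in>Words n d. v w * Tcoeff Q q p w u) = (\<Sum>w\<in>{u, u'}. v w * Tcoeff Q q p w u)"
    by (rule sum.mono_neutral_right[OF finite_Words]) (use assms in auto)
  then show ?thesis using assms(1) by (simp add: actT_def)
qed

lemma actT_Suc:
  assumes p: "Suc p < d" and u: "u \<in> Words n d"
  shows "actT n d Q q (Suc p) v u =
    (if u ! p = u ! Suc p then inverse q * v u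
     else if u ! Suc p < u ! p then v (swap_letters p u) + (inverse q - q) * v u
     else v (swap_letters p u))"
proof -
  have len: "Suc p < length u" using p Words_length[OF u] by simp
  have "actT n d Q q (Suc p) v u = (\<Sum>w\<in>{u, swap_letters p u}. v w * Tcoeff Q q (Suc p) w u)"
  proof (rule actT_two_terms[OF u swap_letters_Words[OF u p]])
    fix w assume w: "w \<in> Words n d" "Tcoeff Q q (Suc p) w u \<noteq> 0"
    then have "take p w = take p u" "drop (Suc (Suc p)) w = drop (Suc (Suc p)) u"
      and R: "Rcoeff q (w ! p) (w ! Suc p) (u ! p) (u ! Suc p) \<noteq> 0"
      by (auto simp: Tcoeff_def split: if_splits)
    then have "w = u[p := w ! p, Suc p := w ! Suc p]"
      using len Words_length[OF u] Words_length[OF w(1)] by (intro eq_update_two_letters) simp_all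
    moreover have "w ! p = u ! p \<and> w ! Suc p = u ! Suc p \<or> w ! p = u ! Suc p \<and> w ! Suc p = u ! p"
      using R by (auto simp: Rcoeff_def split: if_splits)
    ultimately show "w = u \<or> w = swap_letters p u"
      by (auto simp: swap_letters_def)
  qed
  moreover have "Tcoeff Q q (Suc p) (swap_letters p u) u = Rcoeff q (u ! Suc p) (u ! p) (u ! p) (u ! Suc p)"
    using len by (simp add: Tcoeff_def swap_letters_nth) (simp add: swap_letters_def)
  moreover have "swap_letters p u = u \<longleftrightarrow> u ! p = u ! Suc p"
    using len by (metis swap_letters_nth(1) list_update_id swap_letters_def)
  ultimately show ?thesis
    by (auto simp: Tcoeff_def Rcoeff_def)
qed

lemma actT_0:
  assumes d: "0 < d" and u: "u \<in> Words n d"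
  shows "actT n d Q q 0 v u =
    (if u ! 0 = 0 then inverse Q * v u
     else if u ! 0 < 0 then v (negate_first u) + (inverse Q - Q) * v u
     else v (negate_first u))"
proof -
  have len: "0 < length u" using d Words_length[OF u] by simp
  have "actT n d Q q 0 v u = (\<Sum>w\<in>{u, negate_first u}. v w * Tcoeff Q q 0 w u)"
  proof (rule actT_two_terms[OF u negate_first_Words[OF u d]])
    fix w assume w: "w \<in> Words n d" "Tcoeff Q q 0 w u \<noteq> 0"
    then have "drop 1 w = drop 1 u" and K: "Kcoeff Q (w ! 0) (u ! 0) \<noteq> 0"
      by (auto simp: Tcoeff_def split: if_splits)
    then have "w = u[0 := w ! 0]"
      using Words_length[OF u] Words_length[OF w(1)] by (intro eq_update_first_letter) simp_all
    moreover have "w ! 0 = u ! 0 \<or> w ! 0 = - u ! 0"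
      using K by (auto simp: Kcoeff_def split: if_splits)
    ultimately show "w = u \<or> w = negate_first u"
      by (auto simp: negate_first_def)
  qed
  moreover have "Tcoeff Q q 0 (negate_first u) u = Kcoeff Q (- u ! 0) (u ! 0)"
    using len by (simp add: Tcoeff_def negate_first_nth) (simp add: negate_first_def)
  moreover have "negate_first u = u \<longleftrightarrow> u ! 0 = 0"
    using len by (metis negate_first_nth(1) list_update_id negate_first_def minus_zero equal_neg_zero)
  ultimately show ?thesis
    by (auto simp: Tcoeff_def Kcoeff_def)
qed

lemma actT_outside: "u \<notin> Words n d \<Longrightarrow> actT n d Q q p v u = 0"
  by (simp add: actT_def)

lemma actT_Vspace: "actT n d Q q p v \<in> Vspace n d"
  by (simp add: Vspace_def actT_def)

lemma subspace_Vspace: "fun_vs.subspace (Vspace n d)"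
  by (simp add: fun_vs.subspace_def Vspace_def scale_fun_def)

lemma linear_actT: "fun_vs.linear_endo (actT n d Q q p)"
  by (rule fun_vs.linear_endoI)
    (simp_all add: actT_def scale_fun_def fun_eq_iff sum.distrib sum_distrib_left algebra_simps)

lemma actT_Suc_quadratic:
  assumes p: "Suc p < d" and v: "v \<in> Vspace n d" and q: "q \<noteq> 0"
  shows "actT n d Q q (Suc p) (actT n d Q q (Suc p) v) =
    v - scale_fun (q - inverse q) (actT n d Q q (Suc p) v)"
proof
  fix u
  show "actT n d Q q (Suc p) (actT n d Q q (Suc p) v) u =
      (v - scale_fun (q - inverse q) (actT n d Q q (Suc p) v)) u"
  proof (cases "u \<in> Words n d")
    case False
    then show ?thesis using v by (simp add: actT_outside Vspace_def scale_fun_def)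
  next
    case True
    have "Suc p < length u" using p True by (simp add: Words_length)
    then show ?thesis
      using True p q swap_letters_Words[OF True p]
      by (auto simp: actT_Suc swap_letters_nth swap_letters_swap_letters scale_fun_def algebra_simps)
  qed
qed

lemma actT_0_quadratic:
  assumes d: "0 < d" and v: "v \<in> Vspace n d" and Q: "Q \<noteq> 0"
  shows "actT n d Q q 0 (actT n d Q q 0 v) = v - scale_fun (Q - inverse Q) (actT n d Q q 0 v)"
proof
  fix u
  show "actT n d Q q 0 (actT n d Q q 0 v) u = (v - scale_fun (Q - inverse Q) (actT n d Q q 0 v)) u"
  proof (cases "u \<in> Words n d")
    case False
    then show ?thesis using v by (simp add: actT_outside Vspace_def scale_fun_def)
  next
    case True
    have "0 < length u" using d True by (simp add: Words_length)
    then show ?thesis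
      using True d Q negate_first_Words[OF True d]
      by (auto simp: actT_0 negate_first_nth negate_first_negate_first scale_fun_def algebra_simps)
  qed
qed

lemma actT_commute:
  assumes ab: "a + 2 \<le> b" and b: "b < d"
  shows "actT n d Q q a (actT n d Q q b v) = actT n d Q q b (actT n d Q q a v)"
proof
  fix u
  obtain b' where b': "b = Suc b'" using ab by (cases b) auto
  show "actT n d Q q a (actT n d Q q b v) u = actT n d Q q b (actT n d Q q a v) u"
  proof (cases "u \<in> Words n d")
    case False
    then show ?thesis by (simp add: actT_outside)
  next
    case u: True
    have len: "length u = d" using u by (rule Words_length)
    show ?thesis
    proof (cases a)
      case 0
      have "swap_letters b' (negate_first u) = negate_first (swap_letters b' u)"
        using ab b b' 0 len by (intro nth_equalityI) (auto simp: swap_letters_def negate_first_def nth_list_update)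
      then show ?thesis
        using 0 u b b' ab swap_letters_Words[OF u] negate_first_Words[OF u]
        by (auto simp: actT_Suc actT_0 swap_letters_nth negate_first_nth algebra_simps)
    next
      case (Suc a')
      have "swap_letters b' (swap_letters a' u) = swap_letters a' (swap_letters b' u)"
        using Suc ab b b' len by (intro nth_equalityI) (auto simp: swap_letters_def nth_list_update)
      then show ?thesis
        using Suc u b b' ab swap_letters_Words[OF u] len
        by (auto simp: actT_Suc swap_letters_nth algebra_simps)
    qed
  qed
qed

definition R12_loc :: "'k::field \<Rightarrow> (int \<times> int \<times> int \<Rightarrow> 'k) \<Rightarrow> int \<times> int \<times> int \<Rightarrow> 'k" where
  "R12_loc q g = (\<lambda>(a, b, c).
     if a = b then inverse q * g (a, b, c)
     else if b < a then g (b, a, c) + (inverse q - q) * g (a, b, c)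
     else g (b, a, c))"

definition R23_loc :: "'k::field \<Rightarrow> (int \<times> int \<times> int \<Rightarrow> 'k) \<Rightarrow> int \<times> int \<times> int \<Rightarrow> 'k" where
  "R23_loc q g = (\<lambda>(a, b, c).
     if b = c then inverse q * g (a, b, c)
     else if c < b then g (a, c, b) + (inverse q - q) * g (a, b, c)
     else g (a, c, b))"

lemma R_loc_braid:
  assumes "q \<noteq> 0"
  shows "R12_loc q (R23_loc q (R12_loc q g)) = R23_loc q (R12_loc q (R23_loc q g))"
  unfolding fun_eq_iff
  by (auto simp: R12_loc_def R23_loc_def algebra_simps assms) (simp_all add: field_simps assms)

text \<open>T_(p+1) and T_(p+2) only change the letters at positions p, p+1, p+2 of a word. Restricted
  to the words agreeing with u elsewhere, they become R12_loc and R23_loc, so that the braid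
  relation reduces to an identity between operators on functions of three letters.\<close>

definition restrict3 :: "nat \<Rightarrow> nat \<Rightarrow> int list \<Rightarrow> (int list \<Rightarrow> 'k::zero) \<Rightarrow> int \<times> int \<times> int \<Rightarrow> 'k" where
  "restrict3 n p u v = (\<lambda>(a, b, c).
     if a \<in> Idx n \<and> b \<in> Idx n \<and> c \<in> Idx n then v (u[p := a, Suc p := b, Suc (Suc p) := c]) else 0)"

lemma restrict3_actT_left:
  assumes u: "u \<in> Words n d" and p: "Suc (Suc p) < d"
  shows "restrict3 n p u (actT n d Q q (Suc p) v) = R12_loc q (restrict3 n p u v)"
proof
  fix t :: "int \<times> int \<times> int"
  obtain a b c where t: "t = (a, b, c)" by (cases t)
  have len: "length u = d" using u by (rule Words_length)
  show "restrict3 n p u (actT n d Q q (Suc p) v) t = R12_loc q (restrict3 n p u v) t"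
  proof (cases "a \<in> Idx n \<and> b \<in> Idx n \<and> c \<in> Idx n")
    case True
    let ?w = "u[p := a, Suc p := b, Suc (Suc p) := c]"
    have "?w \<in> Words n d" using u True by (simp add: Words_update)
    moreover have "?w ! p = a" "?w ! Suc p = b"
      "swap_letters p ?w = u[p := b, Suc p := a, Suc (Suc p) := c]"
      using p len by (auto simp: swap_letters_def nth_list_update intro!: nth_equalityI)
    ultimately show ?thesis
      using True t p by (simp add: restrict3_def R12_loc_def actT_Suc)
  qed (auto simp: t restrict3_def R12_loc_def)
qed

lemma restrict3_actT_right:
  assumes u: "u \<in> Words n d" and p: "Suc (Suc p) < d"
  shows "restrict3 n p u (actT n d Q q (Suc (Suc p)) v) = R23_loc q (restrict3 n p u v)"
proof
  fix t :: "int \<times> int \<times> int"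
  obtain a b c where t: "t = (a, b, c)" by (cases t)
  have len: "length u = d" using u by (rule Words_length)
  show "restrict3 n p u (actT n d Q q (Suc (Suc p)) v) t = R23_loc q (restrict3 n p u v) t"
  proof (cases "a \<in> Idx n \<and> b \<in> Idx n \<and> c \<in> Idx n")
    case True
    let ?w = "u[p := a, Suc p := b, Suc (Suc p) := c]"
    have "?w \<in> Words n d" using u True by (simp add: Words_update)
    moreover have "?w ! Suc p = b" "?w ! Suc (Suc p) = c"
      "swap_letters (Suc p) ?w = u[p := a, Suc p := c, Suc (Suc p) := b]"
      using p len by (auto simp: swap_letters_def nth_list_update intro!: nth_equalityI)
    ultimately show ?thesis
      using True t p by (simp add: restrict3_def R23_loc_def actT_Suc)
  qed (auto simp: t restrict3_def R23_loc_def)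
qed

lemma actT_braid:
  assumes p: "Suc (Suc p) < d" and q: "q \<noteq> 0"
  shows "actT n d Q q (Suc p) (actT n d Q q (Suc (Suc p)) (actT n d Q q (Suc p) v)) =
    actT n d Q q (Suc (Suc p)) (actT n d Q q (Suc p) (actT n d Q q (Suc (Suc p)) v))"
proof
  fix u
  show "actT n d Q q (Suc p) (actT n d Q q (Suc (Suc p)) (actT n d Q q (Suc p) v)) u =
    actT n d Q q (Suc (Suc p)) (actT n d Q q (Suc p) (actT n d Q q (Suc (Suc p)) v)) u"
  proof (cases "u \<in> Words n d")
    case True
    have at_u: "w u = restrict3 n p u w (u ! p, u ! Suc p, u ! Suc (Suc p))" for w :: "int list \<Rightarrow> 'a"
      using True p by (simp add: restrict3_def Words_nth Words_length)
    show ?thesis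
      unfolding at_u restrict3_actT_left[OF True p] restrict3_actT_right[OF True p] R_loc_braid[OF q] ..
  qed (simp add: actT_outside)
qed

definition K_loc :: "'k::field \<Rightarrow> (int \<times> int \<Rightarrow> 'k) \<Rightarrow> int \<times> int \<Rightarrow> 'k" where
  "K_loc Q g = (\<lambda>(a, b).
     if a = 0 then inverse Q * g (a, b)
     else if a < 0 then g (- a, b) + (inverse Q - Q) * g (a, b)
     else g (- a, b))"

definition R_loc :: "'k::field \<Rightarrow> (int \<times> int \<Rightarrow> 'k) \<Rightarrow> int \<times> int \<Rightarrow> 'k" where
  "R_loc q g = (\<lambda>(a, b).
     if a = b then inverse q * g (a, b)
     else if b < a then g (b, a) + (inverse q - q) * g (a, b)
     else g (b, a))"

lemma KR_loc_braid:
  assumes "q \<noteq> 0" and "Q \<noteq> 0"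
  shows "K_loc Q (R_loc q (K_loc Q (R_loc q g))) = R_loc q (K_loc Q (R_loc q (K_loc Q g)))"
  unfolding fun_eq_iff
  by (auto simp: K_loc_def R_loc_def algebra_simps assms) (simp_all add: field_simps assms)

definition restrict2 :: "nat \<Rightarrow> int list \<Rightarrow> (int list \<Rightarrow> 'k::zero) \<Rightarrow> int \<times> int \<Rightarrow> 'k" where
  "restrict2 n u v = (\<lambda>(a, b). if a \<in> Idx n \<and> b \<in> Idx n then v (u[0 := a, 1 := b]) else 0)"

lemma restrict2_actT_0:
  assumes u: "u \<in> Words n d" and d: "1 < d"
  shows "restrict2 n u (actT n d Q q 0 v) = K_loc Q (restrict2 n u v)"
proof
  fix t :: "int \<times> int"
  obtain a b where t: "t = (a, b)" by (cases t)
  have len: "length u = d" using u by (rule Words_length)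
  show "restrict2 n u (actT n d Q q 0 v) t = K_loc Q (restrict2 n u v) t"
  proof (cases "a \<in> Idx n \<and> b \<in> Idx n")
    case True
    let ?w = "u[0 := a, 1 := b]"
    have "?w \<in> Words n d" using u True by (simp add: Words_update)
    moreover have "?w ! 0 = a" "negate_first ?w = u[0 := - a, 1 := b]"
      using d len by (auto simp: negate_first_def nth_list_update list_update_swap)
    ultimately show ?thesis
      using True t d by (auto simp: restrict2_def K_loc_def actT_0)
  qed (auto simp: t restrict2_def K_loc_def)
qed

lemma restrict2_actT_1:
  assumes u: "u \<in> Words n d" and d: "1 < d"
  shows "restrict2 n u (actT n d Q q 1 v) = R_loc q (restrict2 n u v)"
proof
  fix t :: "int \<times> int"
  obtain a b where t: "t = (a, b)" by (cases t)
  have len: "length u = d" using u by (rule Words_length)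
  show "restrict2 n u (actT n d Q q 1 v) t = R_loc q (restrict2 n u v) t"
  proof (cases "a \<in> Idx n \<and> b \<in> Idx n")
    case True
    let ?w = "u[0 := a, Suc 0 := b]"
    have "?w \<in> Words n d" using u True by (simp add: Words_update)
    moreover have "?w ! 0 = a" "?w ! Suc 0 = b" "swap_letters 0 ?w = u[0 := b, Suc 0 := a]"
      using d len by (auto simp: swap_letters_def nth_list_update list_update_swap)
    ultimately show ?thesis
      using True t d actT_Suc[of 0 d ?w n Q q v] by (auto simp: restrict2_def R_loc_def One_nat_def)
  qed (auto simp: t restrict2_def R_loc_def)
qed

lemma actT_braid_B:
  assumes d: "1 < d" and q: "q \<noteq> 0" and Q: "Q \<noteq> 0"
  shows "actT n d Q q 0 (actT n d Q q 1 (actT n d Q q 0 (actT n d Q q 1 v))) =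
    actT n d Q q 1 (actT n d Q q 0 (actT n d Q q 1 (actT n d Q q 0 v)))"
proof
  fix u
  show "actT n d Q q 0 (actT n d Q q 1 (actT n d Q q 0 (actT n d Q q 1 v))) u =
    actT n d Q q 1 (actT n d Q q 0 (actT n d Q q 1 (actT n d Q q 0 v))) u"
  proof (cases "u \<in> Words n d")
    case True
    have at_u: "w u = restrict2 n u w (u ! 0, u ! 1)" for w :: "int list \<Rightarrow> 'a"
      using True d by (simp add: restrict2_def Words_nth Words_length)
    show ?thesis
      unfolding at_u restrict2_actT_0[OF True d] restrict2_actT_1[OF True d] KR_loc_braid[OF q Q] ..
  qed (simp add: actT_outside)
qed

text \<open>K_action n d Q q j is the action of K_(j+1).\<close>

fun K_action :: "nat \<Rightarrow> nat \<Rightarrow> 'k::field \<Rightarrow> 'k \<Rightarrow> nat \<Rightarrow> (int list \<Rightarrow> 'k) \<Rightarrow> int list \<Rightarrow> 'k" where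
  "K_action n d Q q 0 v = actT n d Q q 0 v"
| "K_action n d Q q (Suc j) v = actT n d Q q (Suc j) (K_action n d Q q j (actT n d Q q (Suc j) v))"

lemma actWord_append: "actWord n d Q q (as @ bs) v = actWord n d Q q bs (actWord n d Q q as v)"
  by (induction as arbitrary: v) auto

lemma actWord_Kword: "actWord n d Q q (Kword (Suc j)) v = K_action n d Q q j v"
proof (induction j arbitrary: v)
  case (Suc j)
  have "Kword (Suc (Suc j)) = [Suc j] @ Kword (Suc j) @ [Suc j]"
    by (simp add: Kword_def)
  then show ?case by (simp add: actWord_append Suc)
qed (simp add: Kword_def)

lemma linear_K_action: "fun_vs.linear_endo (K_action n d Q q j)"
proof (induction j)
  case 0
  have "K_action n d Q q 0 = actT n d Q q 0" by (rule ext) simp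
  then show ?case using linear_actT by metis
next
  case (Suc j)
  interpret K: linear scale_fun scale_fun "K_action n d Q q j" by fact
  interpret T: linear scale_fun scale_fun "actT n d Q q (Suc j)" by (rule linear_actT)
  show ?case by (rule fun_vs.linear_endoI) (simp only: K_action.simps K.add K.scale T.add T.scale)+
qed

lemma K_action_Vspace: "K_action n d Q q j v \<in> Vspace n d"
  by (cases j) (simp_all add: actT_Vspace)

lemma K_action_commute:
  assumes "j + 2 \<le> m" and "m < d"
  shows "actT n d Q q m (K_action n d Q q j v) = K_action n d Q q j (actT n d Q q m v)"
  using assms
proof (induction j arbitrary: v)
  case 0
  then show ?case by (simp add: actT_commute[of 0 m, symmetric])
next
  case (Suc j)
  have "actT n d Q q m (actT n d Q q (Suc j) w) = actT n d Q q (Suc j) (actT n d Q q m w)" for w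
    using Suc.prems by (intro actT_commute[symmetric]) simp_all
  then show ?case using Suc by (simp only: K_action.simps)
qed

lemma K_action_braid_B:
  assumes "Suc j < d" and "q \<noteq> 0" and "Q \<noteq> 0"
  shows "K_action n d Q q j (actT n d Q q (Suc j) (K_action n d Q q j (actT n d Q q (Suc j) v))) =
    actT n d Q q (Suc j) (K_action n d Q q j (actT n d Q q (Suc j) (K_action n d Q q j v)))"
  using assms
proof (induction j arbitrary: v)
  case 0
  then show ?case using actT_braid_B[of d q Q n v] by simp
next
  case (Suc j)
  define S where "S = actT n d Q q (Suc j)"
  define S' where "S' = actT n d Q q (Suc (Suc j))"
  define K where "K = K_action n d Q q j"
  have braid: "S (S' (S w)) = S' (S (S' w))" for w
    unfolding S_def S'_def using actT_braid[of j d q n Q w] Suc.prems by simp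
  have comm: "S' (K w) = K (S' w)" for w
    unfolding S'_def K_def using K_action_commute[of j "Suc (Suc j)" d n Q q w] Suc.prems by simp
  have IH: "K (S (K (S w))) = S (K (S (K w)))" for w
    unfolding S_def K_def using Suc.IH[of w] Suc.prems by simp
  have "S (K (S (S' (S (K (S (S' v))))))) = S (K (S' (S (S' (K (S (S' v)))))))"
    by (simp only: braid)
  also have "\<dots> = S (S' (K (S (K (S' (S (S' v)))))))"
    by (simp only: comm)
  also have "\<dots> = S (S' (K (S (K (S (S' (S v)))))))"
    by (simp only: braid)
  also have "\<dots> = S (S' (S (K (S (K (S' (S v)))))))"
    by (simp only: IH)
  also have "\<dots> = S' (S (S' (K (S (K (S' (S v)))))))"
    by (simp only: braid)
  also have "\<dots> = S' (S (K (S' (S (S' (K (S v)))))))"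
    by (simp only: comm)
  also have "\<dots> = S' (S (K (S (S' (S (K (S v)))))))"
    by (simp only: braid)
  finally show ?case
    by (simp add: S_def S'_def K_def)
qed

fun K_roots :: "'k::field \<Rightarrow> 'k \<Rightarrow> nat \<Rightarrow> 'k list" where
  "K_roots Q q 0 = [inverse Q, - Q]"
| "K_roots Q q (Suc j) =
    map (\<lambda>r. r * q\<^sup>2) (K_roots Q q j) @ map (\<lambda>r. r / q\<^sup>2) (K_roots Q q j) @ K_roots Q q j"

lemma K_action_annihilated:
  assumes "j < d" and "q \<noteq> 0" and "Q \<noteq> 0" and "v \<in> Vspace n d"
  shows "fun_vs.roots_op (K_roots Q q j) (K_action n d Q q j) v = 0"
  using assms
proof (induction j arbitrary: v)
  case 0
  interpret T: linear scale_fun scale_fun "actT n d Q q 0" by (rule linear_actT)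
  show ?case
    using actT_0_quadratic[of d v n Q q] 0
    by (simp only: K_roots.simps fun_vs.roots_op.simps K_action.simps T.diff T.scale)
      (simp add: scale_fun_def fun_eq_iff algebra_simps)
next
  case (Suc j)
  have p: "Suc j < d" and j: "j < d" using Suc.prems(1) by simp_all
  interpret H: affine_hecke2_annihilated scale_fun "actT n d Q q (Suc j)" "K_action n d Q q j"
    "Vspace n d" q "K_roots Q q j"
  proof (intro affine_hecke2_annihilated.intro affine_hecke2.intro affine_hecke2_axioms.intro
      affine_hecke2_annihilated_axioms.intro fun_vs.vector_space_axioms linear_actT linear_K_action)
  qed (simp_all add: subspace_Vspace actT_Vspace K_action_Vspace actT_Suc_quadratic K_action_braid_B
      Suc.IH Suc.prems p j zero_fun_def)
  have "H.Y = K_action n d Q q (Suc j)"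
    by (rule ext) (simp add: H.Y_def)
  then show ?case
    using H.Y_annihilated[OF Suc.prems(4)] by (simp only: K_roots.simps)
qed

lemma K_roots_form:
  assumes q: "q \<noteq> 0" and "r \<in> set (K_roots Q q j)"
  shows "\<exists>k::int. \<bar>k\<bar> \<le> int j \<and> (r = - Q * q powi (2 * k) \<or> r = inverse Q * q powi (2 * k))"
  using assms(2)
proof (induction j arbitrary: r)
  case 0
  then show ?case by auto
next
  case (Suc j)
  have shift: "\<exists>k::int. \<bar>k\<bar> \<le> int (Suc j) \<and>
      (r0 * q powi (2 * e) = - Q * q powi (2 * k) \<or> r0 * q powi (2 * e) = inverse Q * q powi (2 * k))"
    if r0: "r0 \<in> set (K_roots Q q j)" and e: "\<bar>e\<bar> \<le> 1" for r0 e
  proof -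
    obtain k where k: "\<bar>k\<bar> \<le> int j" "r0 = - Q * q powi (2 * k) \<or> r0 = inverse Q * q powi (2 * k)"
      using Suc.IH[OF r0] by blast
    have "q powi (2 * k) * q powi (2 * e) = q powi (2 * (k + e))"
      using q by (simp add: power_int_add distrib_left)
    then show ?thesis
      using k e by (intro exI[of _ "k + e"]) (auto simp: mult.assoc)
  qed
  from Suc.prems show ?case
    using shift[of _ 1] shift[of _ "- 1"] shift[of _ 0]
    by (auto simp: power_int_minus divide_inverse)
qed

theorem proposition2p5:
  fixes Q q lam :: "'k::field" and n d i :: nat
  assumes "Q \<noteq> 0" and "q \<noteq> 0" and "n \<ge> 1" and "d \<ge> 1"
    and "1 \<le> i" and "i \<le> d"
    and "is_eigenvalue_K n d Q q i lam"
  shows "\<exists>j::int. \<bar>j\<bar> < int i \<and>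
           (lam = - Q * q powi (2 * j) \<or> lam = inverse Q * q powi (2 * j))"
proof -
  obtain j where i: "i = Suc j" using \<open>1 \<le> i\<close> by (cases i) auto
  obtain v where v: "v \<in> Vspace n d" "v \<noteq> 0" and eigen: "actWord n d Q q (Kword i) v = scale_fun lam v"
    using assms(7) by (auto simp: is_eigenvalue_K_def scale_fun_def zero_fun_def)
  have "lam \<in> set (K_roots Q q j)"
  proof (rule fun_vs.eigenvalue_in_roots[OF linear_K_action _ v(2)])
    show "K_action n d Q q j v = scale_fun lam v"
      using eigen by (simp add: i actWord_Kword)
    show "fun_vs.roots_op (K_roots Q q j) (K_action n d Q q j) v = 0"
      using assms i v(1) by (intro K_action_annihilated) simp_all
  qed
  then obtain k where "\<bar>k\<bar> \<le> int j" "lam = - Q * q powi (2 * k) \<or> lam = inverse Q * q powi (2 * k)"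
    using K_roots_form[OF \<open>q \<noteq> 0\<close>] by blast
  then show ?thesis
    using i by (intro exI[of _ k]) simp
qed

end
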